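(* For $q\ge1$, the generating function $P_{q,1}(x)=\sum_{n\ge0}p_nx^n$, where $p_n$ is the total number of occurrences of the letter $1$ in all $q$-decreasing words of length $n$, is $$P_{q,1}(x)=\frac{x\left(1-qx^q+qx^{q+1}-2x^{q+1}+x^{2q+2}\right)}{\left(1-2x+x^{q+2}\right)^2},$$ and the generating function for the total number of occurrences of the letter $0$ in all $q$-decreasing words of length $n$ is $$P_{q,0}(x)=\frac{x\left(1-x^q\right)}{\left(1-2x+x^{q+2}\right)^2}.$$
   Context: For $q\ge1$, a binary word is $q$-decreasing if for every maximal run of $0$s, of length $a>0$, together with the (possibly empty) maximal run of $1$s immediately following it, of length $b$, one has $q\cdot a>b$. *)

theory Defs
  imports "HOL-Computational_Algebra.Formal_Power_Series"
begin

text \<open>A maximal run of 0s occupies positions [i,j) with i<j; the maximal run of 1s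
immediately following it occupies positions [j,k) (possibly empty, k = j).\<close>

definition q_decreasing :: "nat \<Rightarrow> nat list \<Rightarrow> bool" where
  "q_decreasing q w \<longleftrightarrow>
     (\<forall>i j k. i < j \<and> j \<le> k \<and> k \<le> length w
        \<and> (\<forall>t. i \<le> t \<and> t < j \<longrightarrow> w ! t = 0)
        \<and> (i = 0 \<or> w ! (i - 1) = 1)
        \<and> (\<forall>t. j \<le> t \<and> t < k \<longrightarrow> w ! t = 1)
        \<and> (k = length w \<or> w ! k = 0)
        \<longrightarrow> k - j < q * (j - i))"

definition q_dec_words :: "nat \<Rightarrow> nat \<Rightarrow> nat list set" where
  "q_dec_words q n = {w. length w = n \<and> set w \<subseteq> {0, 1} \<and> q_decreasing q w}"

definition letter_total :: "nat \<Rightarrow> nat \<Rightarrow> nat \<Rightarrow> nat" where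
  "letter_total q c n = (\<Sum>w\<in>q_dec_words q n. count_list w c)"

end

theory Submission
  imports Defs
begin

text \<open>
  A \<open>q\<close>-decreasing word is a run of 1s followed by a word that is empty or starts with 0,
  and such a zero-led word is either \<open>0\<^sup>n\<close> or a block \<open>0\<^sup>a 1\<^sup>b\<close> with
  \<open>1 \<le> b < q a\<close> followed by a shorter zero-led word. This gives linear equations for the
  generating functions counting the words and their 0s, whose coefficients count the block
  shapes \<open>(a, b)\<close>. Solving them gives \<open>C = (1 - X^(q+1)) / D\<close> for the number of words
  and \<open>P_{q,0} = X (1 - X^q) / D^2\<close>, where \<open>D = 1 - 2 X + X^(q+2)\<close>. Since every
  word of length \<open>n\<close> has \<open>n\<close> letters, \<open>P_{q,1} = X C' - P_{q,0}\<close>.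
\<close>

unbundle fps_syntax

lemma q_decreasingD:
  assumes "q_decreasing q w" "i < j" "j \<le> k" "k \<le> length w"
    "\<And>t. i \<le> t \<Longrightarrow> t < j \<Longrightarrow> w ! t = 0"
    "i = 0 \<or> w ! (i - 1) = 1"
    "\<And>t. j \<le> t \<Longrightarrow> t < k \<Longrightarrow> w ! t = 1"
    "k = length w \<or> w ! k = 0"
  shows "k - j < q * (j - i)"
  using assms(1) unfolding q_decreasing_def
  by (elim allE[of _ i] allE[of _ j] allE[of _ k] impE) (use assms(2-) in auto)

lemma q_decreasingI:
  assumes "\<And>i j k. i < j \<Longrightarrow> j \<le> k \<Longrightarrow> k \<le> length w \<Longrightarrow>
    (\<And>t. i \<le> t \<Longrightarrow> t < j \<Longrightarrow> w ! t = 0) \<Longrightarrow>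
    i = 0 \<or> w ! (i - 1) = 1 \<Longrightarrow>
    (\<And>t. j \<le> t \<Longrightarrow> t < k \<Longrightarrow> w ! t = 1) \<Longrightarrow>
    k = length w \<or> w ! k = 0 \<Longrightarrow> k - j < q * (j - i)"
  shows "q_decreasing q w"
  unfolding q_decreasing_def by (intro allI impI) (use assms in auto)

lemma replicate_append_inject:
  assumes "replicate a x @ u = replicate a' x @ u'"
    and "u = [] \<or> hd u \<noteq> x" and "u' = [] \<or> hd u' \<noteq> x"
  shows "a = a' \<and> u = u'"
  using assms
proof (induction a arbitrary: a')
  case 0
  then show ?case by (cases a') auto
next
  case (Suc a)
  then show ?case by (cases a') auto
qed

lemma split_maximal_run: "\<exists>a u. w = replicate a x @ u \<and> (u = [] \<or> hd u \<noteq> x)"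
proof (induction w)
  case Nil
  show ?case by simp
next
  case (Cons y w)
  then obtain a u where "w = replicate a x @ u" "u = [] \<or> hd u \<noteq> x" by blast
  show ?case
  proof (cases "y = x")
    case True
    with \<open>w = replicate a x @ u\<close> \<open>u = [] \<or> hd u \<noteq> x\<close> show ?thesis
      by (intro exI[of _ "Suc a"] exI[of _ u]) simp
  next
    case False
    then show ?thesis by (intro exI[of _ 0] exI[of _ "y # w"]) simp
  qed
qed

lemma q_decreasing_appendD1:
  assumes "q_decreasing q (u @ v)" "v = [] \<or> hd v = 0"
  shows "q_decreasing q u"
proof (rule q_decreasingI)
  fix i j k assume A: "i < j" "j \<le> k" "k \<le> length u"
    "\<And>t. i \<le> t \<Longrightarrow> t < j \<Longrightarrow> u ! t = 0"
    "i = 0 \<or> u ! (i - 1) = 1"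
    "\<And>t. j \<le> t \<Longrightarrow> t < k \<Longrightarrow> u ! t = 1"
    "k = length u \<or> u ! k = 0"
  show "k - j < q * (j - i)"
  proof (rule q_decreasingD[OF assms(1)])
    show "k = length (u @ v) \<or> (u @ v) ! k = 0"
      using A(3,7) assms(2) by (cases "v = []") (auto simp: nth_append hd_conv_nth)
  qed (use A in \<open>auto simp: nth_append\<close>)
qed

lemma q_decreasing_appendD2:
  assumes "q_decreasing q (u @ v)" "u = [] \<or> last u = 1"
  shows "q_decreasing q v"
proof (rule q_decreasingI)
  fix i j k assume A: "i < j" "j \<le> k" "k \<le> length v"
    "\<And>t. i \<le> t \<Longrightarrow> t < j \<Longrightarrow> v ! t = 0"
    "i = 0 \<or> v ! (i - 1) = 1"
    "\<And>t. j \<le> t \<Longrightarrow> t < k \<Longrightarrow> v ! t = 1"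
    "k = length v \<or> v ! k = 0"
  let ?n = "length u"
  have "(k + ?n) - (j + ?n) < q * ((j + ?n) - (i + ?n))"
  proof (rule q_decreasingD[OF assms(1)])
    fix t assume "i + ?n \<le> t" "t < j + ?n" then show "(u @ v) ! t = 0"
      using A(4)[of "t - ?n"] by (simp add: nth_append)
  next
    fix t assume "j + ?n \<le> t" "t < k + ?n" then show "(u @ v) ! t = 1"
      using A(6)[of "t - ?n"] by (simp add: nth_append)
  next
    show "i + ?n = 0 \<or> (u @ v) ! (i + ?n - 1) = 1"
    proof (cases "i = 0")
      case True
      then show ?thesis using assms(2) by (cases "u = []") (auto simp: nth_append last_conv_nth)
    next
      case False
      then have "\<not> i + ?n - 1 < ?n" "i + ?n - 1 - ?n = i - 1" by auto
      with False A(5) show ?thesis by (simp add: nth_append)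
    qed
  next
    show "k + ?n = length (u @ v) \<or> (u @ v) ! (k + ?n) = 0"
      using A(7) by (auto simp: nth_append)
  qed (use A in auto)
  then show "k - j < q * (j - i)" by simp
qed

text \<open>A run of 0s starting inside \<open>u\<close> cannot cross into \<open>v\<close>, since \<open>u\<close> ends in 1,
  and the run of 1s after it stops before \<open>v\<close>, since \<open>v\<close> starts with 0.\<close>

lemma q_decreasing_appendI:
  assumes "q_decreasing q u" "q_decreasing q v"
    and u: "u = [] \<or> last u = 1" and v: "v = [] \<or> hd v = 0"
  shows "q_decreasing q (u @ v)"
proof (rule q_decreasingI)
  let ?n = "length u"
  have nth1: "\<And>t. t < ?n \<Longrightarrow> (u @ v) ! t = u ! t" by (simp add: nth_append)
  have nth2: "\<And>t. ?n \<le> t \<Longrightarrow> (u @ v) ! t = v ! (t - ?n)" by (simp add: nth_append)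
  fix i j k assume A: "i < j" "j \<le> k" "k \<le> length (u @ v)"
    "\<And>t. i \<le> t \<Longrightarrow> t < j \<Longrightarrow> (u @ v) ! t = 0"
    "i = 0 \<or> (u @ v) ! (i - 1) = 1"
    "\<And>t. j \<le> t \<Longrightarrow> t < k \<Longrightarrow> (u @ v) ! t = 1"
    "k = length (u @ v) \<or> (u @ v) ! k = 0"
  show "k - j < q * (j - i)"
  proof (cases "i < ?n")
    case True
    have last_u: "(u @ v) ! (?n - 1) = 1"
      using True u nth1[of "?n - 1"] by (cases "u = []") (auto simp: last_conv_nth)
    have jn: "j < ?n"
    proof (rule ccontr)
      assume "\<not> j < ?n"
      then show False using A(4)[of "?n - 1"] True last_u by auto
    qed
    have kn: "k \<le> ?n"
    proof (rule ccontr)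
      assume c: "\<not> k \<le> ?n"
      then have "v \<noteq> []" using A(3) by auto
      then have "(u @ v) ! ?n = 0" using v nth2[of ?n] by (simp add: hd_conv_nth)
      then show False using A(6)[of ?n] c jn by auto
    qed
    show ?thesis
    proof (rule q_decreasingD[OF assms(1)])
      show "k = length u \<or> u ! k = 0" using A(7) kn nth1[of k] by (cases "k = ?n") auto
      show "i = 0 \<or> u ! (i - 1) = 1" using A(5) nth1[of "i - 1"] True by auto
    qed (use A nth1 jn kn in auto)
  next
    case False
    have "(k - ?n) - (j - ?n) < q * ((j - ?n) - (i - ?n))"
    proof (rule q_decreasingD[OF assms(2)])
      show "k - ?n = length v \<or> v ! (k - ?n) = 0"
        using A(1,2,3,7) nth2[of k] False by auto
      show "i - ?n = 0 \<or> v ! (i - ?n - 1) = 1"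
        using A(5) nth2[of "i - 1"] False by (cases "i = ?n") auto
    next
      fix t assume "i - ?n \<le> t" "t < j - ?n" then show "v ! t = 0"
        using A(4)[of "t + ?n"] nth2[of "t + ?n"] False by auto
    next
      fix t assume "j - ?n \<le> t" "t < k - ?n" then show "v ! t = 1"
        using A(6)[of "t + ?n"] nth2[of "t + ?n"] False A(1,2) by auto
    qed (use A False in auto)
    then show ?thesis using False A(1,2) by simp
  qed
qed

lemma q_decreasing_append:
  assumes "u = [] \<or> last u = 1" "v = [] \<or> hd v = 0"
  shows "q_decreasing q (u @ v) \<longleftrightarrow> q_decreasing q u \<and> q_decreasing q v"
proof (intro iffI conjI)
  assume "q_decreasing q (u @ v)"
  then show "q_decreasing q u" "q_decreasing q v"
    using assms by (auto intro: q_decreasing_appendD1 q_decreasing_appendD2)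
qed (use assms q_decreasing_appendI in auto)

lemma q_decreasing_Cons_oneI:
  assumes H: "q_decreasing q w"
  shows "q_decreasing q (1 # w)"
proof (rule q_decreasingI)
  fix i j k assume A: "i < j" "j \<le> k" "k \<le> length (1 # w)"
      "\<And>t. i \<le> t \<Longrightarrow> t < j \<Longrightarrow> (1 # w) ! t = 0"
      "i = 0 \<or> (1 # w) ! (i - 1) = 1"
      "\<And>t. j \<le> t \<Longrightarrow> t < k \<Longrightarrow> (1 # w) ! t = 1"
      "k = length (1 # w) \<or> (1 # w) ! k = 0"
  have "i \<noteq> 0" using A(1) A(4)[of 0] by auto
  then obtain i' where i: "i = Suc i'" by (cases i) auto
  obtain j' where j: "j = Suc j'" using A(1) i by (cases j) auto
  obtain k' where k: "k = Suc k'" using A(2) j by (cases k) auto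
  have "k' - j' < q * (j' - i')"
  proof (rule q_decreasingD[OF H])
    fix t assume "i' \<le> t" "t < j'" then show "w ! t = 0"
      using A(4)[of "Suc t"] i j by auto
  next
    fix t assume "j' \<le> t" "t < k'" then show "w ! t = 1"
      using A(6)[of "Suc t"] j k by auto
  next
    show "i' = 0 \<or> w ! (i' - 1) = 1" using A(5) i by (cases i') auto
  qed (use A(1,2,3,7) i j k in auto)
  then show "k - j < q * (j - i)" using i j k by simp
qed

lemma q_decreasing_Cons_one: "q_decreasing q (1 # w) \<longleftrightarrow> q_decreasing q w"
  using q_decreasing_appendD2[of q "[1]" w] q_decreasing_Cons_oneI by auto

lemma q_decreasing_block:
  assumes "a \<ge> 1"
  shows "q_decreasing q (replicate a 0 @ replicate b 1) \<longleftrightarrow> b < q * a"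
proof -
  let ?w = "replicate a 0 @ replicate b (1::nat)"
  have nth: "\<And>t. t < a + b \<Longrightarrow> ?w ! t = (if t < a then 0 else 1)"
    by (simp add: nth_append)
  show ?thesis
  proof
    assume "q_decreasing q ?w"
    then have "(a + b) - a < q * (a - 0)"
      by (rule q_decreasingD) (use assms nth in auto)
    then show "b < q * a" by simp
  next
    assume b: "b < q * a"
    show "q_decreasing q ?w"
    proof (rule q_decreasingI)
      fix i j k assume A: "i < j" "j \<le> k" "k \<le> length ?w"
        "\<And>t. i \<le> t \<Longrightarrow> t < j \<Longrightarrow> ?w ! t = 0"
        "i = 0 \<or> ?w ! (i - 1) = 1"
        "\<And>t. j \<le> t \<Longrightarrow> t < k \<Longrightarrow> ?w ! t = 1"
        "k = length ?w \<or> ?w ! k = 0"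
      have "i < a"
        using A(1,2,3) A(4)[of i] nth[of i] by (auto split: if_splits)
      then have "?w ! (i - 1) = 0"
        using nth[of "i - 1"] by simp
      then have "i = 0"
        using A(5) by auto
      have "j \<le> a"
      proof (rule ccontr)
        assume "\<not> j \<le> a"
        then show False using A(2,3) A(4)[of a] nth[of a] \<open>i = 0\<close> \<open>i < a\<close> by auto
      qed
      show "k - j < q * (j - i)"
      proof (cases "j < a")
        case True
        have "k = j"
        proof (rule ccontr)
          assume "k \<noteq> j"
          then show False using A(2,3) A(6)[of j] nth[of j] True by auto
        qed
        then show ?thesis using b A(1) by (cases q) auto
      next
        case False
        then show ?thesis using \<open>j \<le> a\<close> A(3) b \<open>i = 0\<close> by simp
      qed
    qed
  qed
qed

definition zero_led_words :: "nat \<Rightarrow> nat \<Rightarrow> nat list set" where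
  "zero_led_words q n = {w \<in> q_dec_words q n. w = [] \<or> hd w = 0}"

definition prepend_block :: "nat \<Rightarrow> nat \<Rightarrow> nat list \<Rightarrow> nat list" where
  "prepend_block a b r = replicate a 0 @ replicate b 1 @ r"

definition proper_block_shapes :: "nat \<Rightarrow> nat \<Rightarrow> (nat \<times> nat) set" where
  "proper_block_shapes q L = {(a, b). 1 \<le> a \<and> 1 \<le> b \<and> b < q * a \<and> a + b = L}"

lemma finite_q_dec_words: "finite (q_dec_words q n)"
proof (rule finite_subset)
  show "q_dec_words q n \<subseteq> {w. set w \<subseteq> {0, 1} \<and> length w = n}"
    unfolding q_dec_words_def by auto
qed (simp add: finite_lists_length_eq)

lemma finite_zero_led_words: "finite (zero_led_words q n)"
  unfolding zero_led_words_def using finite_q_dec_words by simp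

lemma finite_proper_block_shapes: "finite (proper_block_shapes q L)"
  by (rule finite_subset[of _ "{..L} \<times> {..L}"]) (auto simp: proper_block_shapes_def)

lemma proper_block_shapes_0: "proper_block_shapes q 0 = {}"
  unfolding proper_block_shapes_def by auto

lemma q_dec_words_0: "q_dec_words q 0 = {[]}"
  unfolding q_dec_words_def q_decreasing_def by auto

lemma zero_led_words_0: "zero_led_words q 0 = {[]}"
  unfolding zero_led_words_def q_dec_words_0 by auto

lemma q_dec_words_Suc:
  "q_dec_words q (Suc n) = zero_led_words q (Suc n) \<union> Cons 1 ` q_dec_words q n"
proof (intro equalityI subsetI)
  fix w assume w: "w \<in> q_dec_words q (Suc n)"
  then obtain x w' where "w = x # w'" "x = 0 \<or> x = 1"
    unfolding q_dec_words_def by (cases w) auto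
  then show "w \<in> zero_led_words q (Suc n) \<union> Cons 1 ` q_dec_words q n"
    using w q_decreasing_Cons_one unfolding zero_led_words_def q_dec_words_def by auto
next
  fix w assume "w \<in> zero_led_words q (Suc n) \<union> Cons 1 ` q_dec_words q n"
  then show "w \<in> q_dec_words q (Suc n)"
    unfolding zero_led_words_def q_dec_words_def using q_decreasing_Cons_one by auto
qed

lemma sum_q_dec_words_Suc:
  "(\<Sum>w\<in>q_dec_words q (Suc n). f w) =
     (\<Sum>w\<in>zero_led_words q (Suc n). f w) + (\<Sum>w\<in>q_dec_words q n. f (1 # w))"
proof -
  have "zero_led_words q (Suc n) \<inter> Cons 1 ` q_dec_words q n = {}"
    unfolding zero_led_words_def by auto
  then have "(\<Sum>w\<in>q_dec_words q (Suc n). f w) =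
      (\<Sum>w\<in>zero_led_words q (Suc n). f w) + (\<Sum>w\<in>Cons 1 ` q_dec_words q n. f w)"
    unfolding q_dec_words_Suc
    by (intro sum.union_disjoint) (simp_all add: finite_zero_led_words finite_q_dec_words)
  also have "(\<Sum>w\<in>Cons 1 ` q_dec_words q n. f w) = (\<Sum>w\<in>q_dec_words q n. f (1 # w))"
    by (simp add: sum.reindex)
  finally show ?thesis .
qed

lemma zeros_in_zero_led_words:
  assumes "q \<ge> 1" "n \<ge> 1"
  shows "replicate n 0 \<in> zero_led_words q n"
  using q_decreasing_block[of n q 0] assms
  unfolding zero_led_words_def q_dec_words_def by (cases n) auto

lemma prepend_block_in_zero_led_words:
  assumes "(a, b) \<in> proper_block_shapes q L" "L \<le> n" "r \<in> zero_led_words q (n - L)"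
  shows "prepend_block a b r \<in> zero_led_words q n"
proof -
  have ab: "1 \<le> a" "1 \<le> b" "b < q * a" "a + b = L"
    using assms(1) unfolding proper_block_shapes_def by auto
  have r: "length r = n - L" "set r \<subseteq> {0, 1}" "q_decreasing q r" "r = [] \<or> hd r = 0"
    using assms(3) unfolding zero_led_words_def q_dec_words_def by auto
  have "q_decreasing q ((replicate a 0 @ replicate b 1) @ r)"
    using q_decreasing_append[of "replicate a 0 @ replicate b 1" r q] r(3,4)
      q_decreasing_block[of a q b] ab by simp
  then show ?thesis
    using ab r assms(2) unfolding zero_led_words_def q_dec_words_def prepend_block_def
    by (cases a) auto
qed

lemma zero_led_word_decompose:
  assumes w: "w \<in> zero_led_words q n" and "w \<noteq> replicate n 0"
  obtains a b r where "(a, b) \<in> proper_block_shapes q (a + b)" "a + b \<le> n"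
    "r \<in> zero_led_words q (n - (a + b))" "w = prepend_block a b r"
proof -
  have w_props: "length w = n" "set w \<subseteq> {0, 1}" "q_decreasing q w" "w = [] \<or> hd w = 0"
    using w unfolding zero_led_words_def q_dec_words_def by auto
  obtain a u where u: "w = replicate a 0 @ u" "u = [] \<or> hd u \<noteq> 0"
    using split_maximal_run[of w 0] by blast
  obtain b r where r: "u = replicate b 1 @ r" "r = [] \<or> hd r \<noteq> 1"
    using split_maximal_run[of u 1] by blast
  have "u \<noteq> []"
    using u w_props(1) assms(2) by auto
  then have "hd u \<in> set w"
    using u(1) by simp
  then have "hd u = 1"
    using u(2) w_props(2) \<open>u \<noteq> []\<close> by auto
  have "w \<noteq> []" using \<open>u \<noteq> []\<close> u(1) by simp
  then have "a \<ge> 1"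
    using u \<open>hd u = 1\<close> w_props(4) by (cases a) auto
  have "b \<ge> 1"
    using r \<open>u \<noteq> []\<close> \<open>hd u = 1\<close> by (cases b) auto
  have r_set: "set r \<subseteq> {0, 1}"
    using w_props(2) u(1) r(1) by auto
  then have r_hd: "r = [] \<or> hd r = 0"
    using r(2) by (cases r) auto
  have block_last: "last (replicate a 0 @ replicate b 1) = (1::nat)"
    using \<open>b \<ge> 1\<close> by simp
  have "q_decreasing q ((replicate a 0 @ replicate b 1) @ r)"
    using w_props(3) u(1) r(1) by simp
  then have "q_decreasing q (replicate a 0 @ replicate b 1)" "q_decreasing q r"
    using q_decreasing_append[OF disjI2[OF block_last] r_hd] by simp_all
  then have "b < q * a"
    using q_decreasing_block[OF \<open>a \<ge> 1\<close>] by simp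
  have len: "a + b + length r = n"
    using w_props(1) u(1) r(1) by simp
  show thesis
  proof
    show "(a, b) \<in> proper_block_shapes q (a + b)"
      using \<open>a \<ge> 1\<close> \<open>b \<ge> 1\<close> \<open>b < q * a\<close> unfolding proper_block_shapes_def by simp
    show "r \<in> zero_led_words q (n - (a + b))"
      using len r_set \<open>q_decreasing q r\<close> r_hd unfolding zero_led_words_def q_dec_words_def by auto
    show "w = prepend_block a b r"
      using u(1) r(1) unfolding prepend_block_def by simp
  qed (use len in simp)
qed

lemma prepend_block_inject:
  assumes "prepend_block a b r = prepend_block a' b' r'" "b \<ge> 1" "b' \<ge> 1"
    and r: "r = [] \<or> hd r = 0" and r': "r' = [] \<or> hd r' = 0"
  shows "a = a' \<and> b = b' \<and> r = r'"
proof -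
  have ones_first: "hd (replicate c 1 @ s) \<noteq> (0::nat)" if "c \<ge> 1" for c s
    using that by (cases c) auto
  have "a = a' \<and> replicate b 1 @ r = replicate b' 1 @ r'"
    using assms(1-3) ones_first unfolding prepend_block_def by (intro replicate_append_inject) auto
  moreover have "r = [] \<or> hd r \<noteq> 1" "r' = [] \<or> hd r' \<noteq> 1"
    using r r' by auto
  ultimately show ?thesis
    using replicate_append_inject[of b 1 r b' r'] by simp
qed

lemma bij_betw_prepend_block:
  "bij_betw (\<lambda>(p, r). prepend_block (fst p) (snd p) r)
     (SIGMA p:(\<Union>L\<in>{0..n}. proper_block_shapes q L). zero_led_words q (n - (fst p + snd p)))
     (zero_led_words q n - {replicate n 0})"
  (is "bij_betw ?f ?S _")
proof (rule bij_betw_imageI)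
  show "inj_on ?f ?S"
  proof (rule inj_onI)
    fix x y assume "x \<in> ?S" "y \<in> ?S" "?f x = ?f y"
    moreover obtain a b r a' b' r' where "x = ((a, b), r)" "y = ((a', b'), r')"
      by (metis prod.collapse)
    ultimately show "x = y"
      using prepend_block_inject[of a b r a' b' r']
      by (auto simp: proper_block_shapes_def zero_led_words_def)
  qed
  show "?f ` ?S = zero_led_words q n - {replicate n 0}"
  proof (intro equalityI subsetI)
    fix w assume "w \<in> ?f ` ?S"
    then obtain a b r L where "(a, b) \<in> proper_block_shapes q L" "L \<le> n"
        "r \<in> zero_led_words q (n - L)" "w = prepend_block a b r"
      by (auto simp: proper_block_shapes_def)
    moreover have "1 \<in> set w"
      using calculation(1,4) by (auto simp: proper_block_shapes_def prepend_block_def)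
    ultimately show "w \<in> zero_led_words q n - {replicate n 0}"
      using prepend_block_in_zero_led_words by auto
  next
    fix w assume "w \<in> zero_led_words q n - {replicate n 0}"
    then have "w \<in> zero_led_words q n" "w \<noteq> replicate n 0" by auto
    then obtain a b r where "(a, b) \<in> proper_block_shapes q (a + b)" "a + b \<le> n"
        "r \<in> zero_led_words q (n - (a + b))" "w = prepend_block a b r"
      by (rule zero_led_word_decompose)
    then show "w \<in> ?f ` ?S"
      by (intro image_eqI[where x = "((a, b), r)"]) auto
  qed
qed

lemma sum_zero_led_words:
  assumes "q \<ge> 1" "n \<ge> 1"
  shows "(\<Sum>w\<in>zero_led_words q n. f w) = f (replicate n 0) +
    (\<Sum>L=0..n. \<Sum>p\<in>proper_block_shapes q L. \<Sum>r\<in>zero_led_words q (n - L).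
       f (prepend_block (fst p) (snd p) r))"
proof -
  let ?P = "\<Union>L\<in>{0..n}. proper_block_shapes q L"
  let ?g = "\<lambda>p. \<Sum>r\<in>zero_led_words q (n - (fst p + snd p)). f (prepend_block (fst p) (snd p) r)"
  have "(\<Sum>w\<in>zero_led_words q n. f w) =
      f (replicate n 0) + (\<Sum>w\<in>zero_led_words q n - {replicate n 0}. f w)"
    using finite_zero_led_words zeros_in_zero_led_words[OF assms] by (rule sum.remove)
  also have "(\<Sum>w\<in>zero_led_words q n - {replicate n 0}. f w) =
      (\<Sum>(p, r)\<in>(SIGMA p:?P. zero_led_words q (n - (fst p + snd p))).
         f (prepend_block (fst p) (snd p) r))"
    using sum.reindex_bij_betw[OF bij_betw_prepend_block, of f] by (simp add: case_prod_beta)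
  also have "\<dots> = (\<Sum>p\<in>?P. ?g p)"
    by (rule sum.Sigma[symmetric]) (auto simp: finite_proper_block_shapes finite_zero_led_words)
  also have "\<dots> = (\<Sum>L=0..n. \<Sum>p\<in>proper_block_shapes q L. ?g p)"
    by (rule sum.UNION_disjoint)
      (simp, simp add: finite_proper_block_shapes, auto simp: proper_block_shapes_def)
  also have "\<dots> = (\<Sum>L=0..n. \<Sum>p\<in>proper_block_shapes q L. \<Sum>r\<in>zero_led_words q (n - L).
       f (prepend_block (fst p) (snd p) r))"
    by (intro sum.cong refl) (auto simp: proper_block_shapes_def)
  finally show ?thesis .
qed

lemma card_zero_led_words:
  assumes "q \<ge> 1" "n \<ge> 1"
  shows "card (zero_led_words q n) =
    1 + (\<Sum>L=0..n. card (proper_block_shapes q L) * card (zero_led_words q (n - L)))"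
  using sum_zero_led_words[OF assms, of "\<lambda>_. 1::nat"] by simp

lemma count_list_replicate_self: "count_list (replicate n x) x = n"
  by (induction n) simp_all

lemma count_list_prepend_block_0: "count_list (prepend_block a b r) 0 = a + count_list r 0"
  by (induction a) (simp_all add: prepend_block_def)

lemma zeros_zero_led_words:
  assumes "q \<ge> 1" "n \<ge> 1"
  shows "(\<Sum>w\<in>zero_led_words q n. count_list w 0) =
    n + (\<Sum>L=0..n. (\<Sum>p\<in>proper_block_shapes q L. fst p) * card (zero_led_words q (n - L))
                   + card (proper_block_shapes q L) * (\<Sum>w\<in>zero_led_words q (n - L). count_list w 0))"
  using sum_zero_led_words[OF assms, of "\<lambda>w. count_list w 0"]
  by (simp add: count_list_replicate_self count_list_prepend_block_0 sum.distrib
      sum_distrib_right mult.commute)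

definition block_shapes :: "nat \<Rightarrow> nat \<Rightarrow> (nat \<times> nat) set" where
  "block_shapes q L = {(a, b). 1 \<le> a \<and> b < q * a \<and> a + b = L}"

lemma finite_block_shapes: "finite (block_shapes q L)"
  by (rule finite_subset[of _ "{..L} \<times> {..L}"]) (auto simp: block_shapes_def)

lemma block_shapes_0: "block_shapes q 0 = {}"
  unfolding block_shapes_def by auto

lemma block_shapes_eq_insert_proper:
  assumes "q \<ge> 1" "L \<ge> 1"
  shows "block_shapes q L = insert (L, 0) (proper_block_shapes q L)"
    and "(L, 0) \<notin> proper_block_shapes q L"
  using assms unfolding block_shapes_def proper_block_shapes_def by (auto simp: Suc_le_eq)

text \<open>A shape with at least \<open>q\<close> ones arises from a shorter shape by adding one 0 and \<open>q\<close> 1s.\<close>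

lemma block_shapes_split:
  "block_shapes q L = (\<lambda>b. (L - b, b)) ` {..<min q L}
     \<union> (\<lambda>p. (fst p + 1, snd p + q)) ` block_shapes q (L - Suc q)"
  (is "_ = ?few_ones \<union> ?many_ones")
proof (intro equalityI subsetI)
  fix x assume "x \<in> block_shapes q L"
  then obtain a b where x: "x = (a, b)" "1 \<le> a" "b < q * a" "a + b = L"
    unfolding block_shapes_def by auto
  show "x \<in> ?few_ones \<union> ?many_ones"
  proof (cases "b < q")
    case True
    then show ?thesis using x by (auto intro!: image_eqI[where x = b])
  next
    case False
    then have "a \<ge> 2"
      using x(2,3) by (cases "a = 1") auto
    moreover have "b - q < q * (a - 1)"
      using x(3) False by (simp add: diff_mult_distrib2)
    ultimately have "(a - 1, b - q) \<in> block_shapes q (L - Suc q)"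
      using x False unfolding block_shapes_def by auto
    then show ?thesis
      using x \<open>a \<ge> 2\<close> False by (auto intro!: image_eqI[where x = "(a - 1, b - q)"])
  qed
next
  fix x assume "x \<in> ?few_ones \<union> ?many_ones"
  then show "x \<in> block_shapes q L"
  proof
    assume "x \<in> ?few_ones"
    then obtain b where b: "b < q" "b < L" "x = (L - b, b)" by auto
    have "q * 1 \<le> q * (L - b)"
      using b by (intro mult_le_mono2) auto
    then have "b < q * (L - b)"
      using b(1) by linarith
    then show ?thesis using b unfolding block_shapes_def by auto
  next
    assume "x \<in> ?many_ones"
    then obtain a b where "1 \<le> a" "b < q * a" "a + b = L - Suc q" "x = (a + 1, b + q)"
      unfolding block_shapes_def by auto
    moreover from this have "L \<ge> Suc q" by simp
    ultimately show ?thesis unfolding block_shapes_def by auto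
  qed
qed

lemma sum_block_shapes:
  "(\<Sum>p\<in>block_shapes q L. f p) =
     (\<Sum>b<min q L. f (L - b, b)) + (\<Sum>p\<in>block_shapes q (L - Suc q). f (fst p + 1, snd p + q))"
proof -
  have "(\<Sum>p\<in>block_shapes q L. f p) =
      (\<Sum>p\<in>(\<lambda>b. (L - b, b)) ` {..<min q L}. f p) +
      (\<Sum>p\<in>(\<lambda>p. (fst p + 1, snd p + q)) ` block_shapes q (L - Suc q). f p)"
    by (subst block_shapes_split, rule sum.union_disjoint) (auto simp: finite_block_shapes)
  also have "(\<Sum>p\<in>(\<lambda>b. (L - b, b)) ` {..<min q L}. f p) = (\<Sum>b<min q L. f (L - b, b))"
    by (rule sum.reindex_cong[where l = "\<lambda>b. (L - b, b)"]) (auto simp: inj_on_def)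
  also have "(\<Sum>p\<in>(\<lambda>p. (fst p + 1, snd p + q)) ` block_shapes q (L - Suc q). f p) =
      (\<Sum>p\<in>block_shapes q (L - Suc q). f (fst p + 1, snd p + q))"
    by (rule sum.reindex_cong[where l = "\<lambda>p. (fst p + 1, snd p + q)"]) (auto simp: inj_on_def)
  finally show ?thesis .
qed

lemma fps_times_one_minus_X_nth:
  "((f :: 'a::comm_ring_1 fps) * (1 - fps_X)) $ n = (if n = 0 then f $ 0 else f $ n - f $ (n - 1))"
proof -
  have "f * (1 - fps_X) = f - fps_X * f" by (simp add: algebra_simps)
  then show ?thesis by simp
qed

definition count_fps :: "nat \<Rightarrow> rat fps" where
  "count_fps q = Abs_fps (\<lambda>n. of_nat (card (q_dec_words q n)))"

definition zero_led_count_fps :: "nat \<Rightarrow> rat fps" where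
  "zero_led_count_fps q = Abs_fps (\<lambda>n. of_nat (card (zero_led_words q n)))"

definition zero_led_zeros_fps :: "nat \<Rightarrow> rat fps" where
  "zero_led_zeros_fps q = Abs_fps (\<lambda>n. of_nat (\<Sum>w\<in>zero_led_words q n. count_list w 0))"

definition shape_count_fps :: "nat \<Rightarrow> rat fps" where
  "shape_count_fps q = Abs_fps (\<lambda>n. of_nat (card (block_shapes q n)))"

definition shape_zeros_fps :: "nat \<Rightarrow> rat fps" where
  "shape_zeros_fps q = Abs_fps (\<lambda>n. of_nat (\<Sum>p\<in>block_shapes q n. fst p))"

definition geometric_fps :: "rat fps" where
  "geometric_fps = Abs_fps (\<lambda>_. 1)"

definition naturals_fps :: "rat fps" where
  "naturals_fps = Abs_fps of_nat"

lemma geometric_fps_times_one_minus_X: "geometric_fps * (1 - fps_X) = 1"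
  by (rule fps_ext) (simp add: fps_times_one_minus_X_nth geometric_fps_def)

lemma naturals_fps_times_one_minus_X: "naturals_fps * (1 - fps_X) = fps_X * geometric_fps"
  by (rule fps_ext) (simp add: fps_times_one_minus_X_nth naturals_fps_def geometric_fps_def)

lemma count_fps_times_one_minus_X: "count_fps q * (1 - fps_X) = zero_led_count_fps q"
proof (rule fps_ext)
  fix n
  show "(count_fps q * (1 - fps_X)) $ n = zero_led_count_fps q $ n"
  proof (cases n)
    case 0
    then show ?thesis
      by (simp add: fps_times_one_minus_X_nth count_fps_def zero_led_count_fps_def
          q_dec_words_0 zero_led_words_0)
  next
    case (Suc m)
    have "card (q_dec_words q (Suc m)) = card (zero_led_words q (Suc m)) + card (q_dec_words q m)"
      using sum_q_dec_words_Suc[where f = "\<lambda>_. 1::nat"] by simp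
    then show ?thesis
      using Suc by (simp add: fps_times_one_minus_X_nth count_fps_def zero_led_count_fps_def)
  qed
qed

lemma letter_total_0_fps_times_one_minus_X:
  "Abs_fps (\<lambda>n. of_nat (letter_total q 0 n)) * (1 - fps_X) = zero_led_zeros_fps q"
proof (rule fps_ext)
  fix n
  show "(Abs_fps (\<lambda>n. of_nat (letter_total q 0 n)) * (1 - fps_X)) $ n = zero_led_zeros_fps q $ n"
  proof (cases n)
    case 0
    then show ?thesis
      by (simp add: fps_times_one_minus_X_nth zero_led_zeros_fps_def letter_total_def
          q_dec_words_0 zero_led_words_0)
  next
    case (Suc m)
    have "letter_total q 0 (Suc m) =
        (\<Sum>w\<in>zero_led_words q (Suc m). count_list w 0) + letter_total q 0 m"
      unfolding letter_total_def using sum_q_dec_words_Suc[where f = "\<lambda>w. count_list w 0"] by simp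
    then show ?thesis
      using Suc by (simp add: fps_times_one_minus_X_nth zero_led_zeros_fps_def)
  qed
qed

text \<open>The improper shapes are the all-zero blocks \<open>(L, 0)\<close> with \<open>L \<ge> 1\<close>, counted by
  \<open>X / (1 - X)\<close> and, weighted by their number of 0s, by \<^const>\<open>naturals_fps\<close>.\<close>

lemma proper_shape_count_nth:
  assumes "q \<ge> 1"
  shows "(shape_count_fps q - fps_X * geometric_fps) $ L = of_nat (card (proper_block_shapes q L))"
proof (cases "L = 0")
  case True
  then show ?thesis
    by (simp add: shape_count_fps_def block_shapes_0 proper_block_shapes_0)
next
  case False
  then have "card (block_shapes q L) = Suc (card (proper_block_shapes q L))"
    using block_shapes_eq_insert_proper[OF assms, of L] finite_proper_block_shapes by simp
  then show ?thesis
    using False by (simp add: shape_count_fps_def geometric_fps_def)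
qed

lemma proper_shape_zeros_nth:
  assumes "q \<ge> 1"
  shows "(shape_zeros_fps q - naturals_fps) $ L = of_nat (\<Sum>p\<in>proper_block_shapes q L. fst p)"
proof (cases "L = 0")
  case True
  then show ?thesis
    by (simp add: shape_zeros_fps_def naturals_fps_def block_shapes_0 proper_block_shapes_0)
next
  case False
  then have "(\<Sum>p\<in>block_shapes q L. fst p) = L + (\<Sum>p\<in>proper_block_shapes q L. fst p)"
    using block_shapes_eq_insert_proper[OF assms, of L] finite_proper_block_shapes by simp
  then show ?thesis
    by (simp add: shape_zeros_fps_def naturals_fps_def del: of_nat_sum)
qed

lemma zero_led_count_fps_eq:
  assumes "q \<ge> 1"
  shows "zero_led_count_fps q =
    geometric_fps + (shape_count_fps q - fps_X * geometric_fps) * zero_led_count_fps q"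
proof (rule fps_ext)
  fix n
  show "zero_led_count_fps q $ n =
    (geometric_fps + (shape_count_fps q - fps_X * geometric_fps) * zero_led_count_fps q) $ n"
  proof (cases "n = 0")
    case True
    then show ?thesis
      using proper_shape_count_nth[OF assms, of 0]
      by (simp add: zero_led_count_fps_def geometric_fps_def zero_led_words_0 fps_mult_nth
          proper_block_shapes_0)
  next
    case False
    have "((shape_count_fps q - fps_X * geometric_fps) * zero_led_count_fps q) $ n =
        of_nat (\<Sum>L=0..n. card (proper_block_shapes q L) * card (zero_led_words q (n - L)))"
      by (simp only: fps_mult_nth proper_shape_count_nth[OF assms]) (simp add: zero_led_count_fps_def)
    then show ?thesis
      using card_zero_led_words[OF assms, of n] False
      by (simp add: zero_led_count_fps_def geometric_fps_def del: of_nat_sum of_nat_mult)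
  qed
qed

lemma zero_led_zeros_fps_eq:
  assumes "q \<ge> 1"
  shows "zero_led_zeros_fps q = naturals_fps
    + (shape_zeros_fps q - naturals_fps) * zero_led_count_fps q
    + (shape_count_fps q - fps_X * geometric_fps) * zero_led_zeros_fps q"
proof (rule fps_ext)
  fix n
  show "zero_led_zeros_fps q $ n = (naturals_fps
    + (shape_zeros_fps q - naturals_fps) * zero_led_count_fps q
    + (shape_count_fps q - fps_X * geometric_fps) * zero_led_zeros_fps q) $ n"
  proof (cases "n = 0")
    case True
    then show ?thesis
      using proper_shape_count_nth[OF assms, of 0] proper_shape_zeros_nth[OF assms, of 0]
      by (simp add: zero_led_zeros_fps_def naturals_fps_def zero_led_words_0 fps_mult_nth
          proper_block_shapes_0)
  next
    case False
    have "((shape_zeros_fps q - naturals_fps) * zero_led_count_fps q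
        + (shape_count_fps q - fps_X * geometric_fps) * zero_led_zeros_fps q) $ n =
      of_nat (\<Sum>L=0..n. (\<Sum>p\<in>proper_block_shapes q L. fst p) * card (zero_led_words q (n - L))
        + card (proper_block_shapes q L) * (\<Sum>w\<in>zero_led_words q (n - L). count_list w 0))"
      by (simp only: fps_add_nth fps_mult_nth proper_shape_count_nth[OF assms]
          proper_shape_zeros_nth[OF assms] sum.distrib[symmetric])
        (simp add: zero_led_count_fps_def zero_led_zeros_fps_def)
    then show ?thesis
      using zeros_zero_led_words[OF assms, of n] False
      by (simp add: zero_led_zeros_fps_def naturals_fps_def add.assoc
          del: of_nat_sum of_nat_mult of_nat_add)
  qed
qed

lemma shape_count_fps_eq:
  "shape_count_fps q = Abs_fps (\<lambda>n. of_nat (min q n)) + fps_X ^ Suc q * shape_count_fps q"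
proof (rule fps_ext)
  fix n
  have "card (block_shapes q n) = min q n + card (block_shapes q (n - Suc q))"
    using sum_block_shapes[where q = q and L = n and f = "\<lambda>_. 1::nat"] by simp
  moreover have "n < Suc q \<Longrightarrow> block_shapes q (n - Suc q) = {}"
    using block_shapes_0 by simp
  ultimately show "shape_count_fps q $ n =
      (Abs_fps (\<lambda>n. of_nat (min q n)) + fps_X ^ Suc q * shape_count_fps q) $ n"
    by (simp add: shape_count_fps_def fps_X_power_mult_nth del: power_Suc)
qed

lemma shape_zeros_fps_eq:
  "shape_zeros_fps q = Abs_fps (\<lambda>n. of_nat (\<Sum>b<min q n. n - b))
     + fps_X ^ Suc q * (shape_zeros_fps q + shape_count_fps q)"
proof (rule fps_ext)
  fix n
  have "(\<Sum>p\<in>block_shapes q n. fst p) =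
      (\<Sum>b<min q n. n - b) + (\<Sum>p\<in>block_shapes q (n - Suc q). fst p + 1)"
    using sum_block_shapes[where q = q and L = n and f = fst] by simp
  also have "\<dots> = (\<Sum>b<min q n. n - b) + (\<Sum>p\<in>block_shapes q (n - Suc q). fst p)
      + card (block_shapes q (n - Suc q))"
    by (subst sum.distrib) simp
  finally have "(of_nat (\<Sum>p\<in>block_shapes q n. fst p) :: rat) =
      of_nat (\<Sum>b<min q n. n - b) + of_nat (\<Sum>p\<in>block_shapes q (n - Suc q). fst p)
      + of_nat (card (block_shapes q (n - Suc q)))"
    by (simp only: of_nat_add)
  moreover have "n < Suc q \<Longrightarrow> block_shapes q (n - Suc q) = {}"
    using block_shapes_0 by simp
  ultimately show "shape_zeros_fps q $ n = (Abs_fps (\<lambda>n. of_nat (\<Sum>b<min q n. n - b))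
     + fps_X ^ Suc q * (shape_zeros_fps q + shape_count_fps q)) $ n"
    by (cases "n < Suc q")
      (simp_all add: shape_zeros_fps_def shape_count_fps_def fps_X_power_mult_nth
        del: power_Suc of_nat_sum)
qed

lemma min_fps_times_one_minus_X_sq:
  assumes "q \<ge> 1"
  shows "Abs_fps (\<lambda>n. of_nat (min q n) :: rat) * (1 - fps_X)^2 = fps_X * (1 - fps_X ^ q)"
proof -
  have "Abs_fps (\<lambda>n. of_nat (min q n) :: rat) * (1 - fps_X) =
      Abs_fps (\<lambda>n. if 1 \<le> n \<and> n \<le> q then 1 else 0)"
    by (rule fps_ext) (auto simp: fps_times_one_minus_X_nth)
  also have "\<dots> * (1 - fps_X) = fps_X - fps_X ^ Suc q"
    using assms by (intro fps_ext) (auto simp: fps_times_one_minus_X_nth fps_X_power_nth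
        simp del: power_Suc)
  finally show ?thesis
    by (simp add: power2_eq_square mult.assoc algebra_simps)
qed

lemma min_sum_fps_times_one_minus_X:
  "Abs_fps (\<lambda>n. of_nat (\<Sum>b<min q n. n - b) :: rat) * (1 - fps_X) = Abs_fps (\<lambda>n. of_nat (min q n))"
proof (rule fps_ext)
  fix n
  have shift: "(\<Sum>b<k. Suc m - b) = (\<Sum>b<k. m - b) + k" if "k \<le> Suc m" for k m
  proof -
    have "(\<Sum>b<k. Suc m - b) = (\<Sum>b<k. (m - b) + 1)"
      by (rule sum.cong) (use that in auto)
    also have "\<dots> = (\<Sum>b<k. m - b) + k"
      by (subst sum.distrib) simp
    finally show ?thesis .
  qed
  show "(Abs_fps (\<lambda>n. of_nat (\<Sum>b<min q n. n - b) :: rat) * (1 - fps_X)) $ n =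
      Abs_fps (\<lambda>n. of_nat (min q n)) $ n"
  proof (cases n)
    case 0
    then show ?thesis by (simp add: fps_times_one_minus_X_nth)
  next
    case (Suc m)
    have "(\<Sum>b<min q (Suc m). Suc m - b) = (\<Sum>b<min q m. m - b) + min q (Suc m)"
    proof (cases "Suc m \<le> q")
      case True
      then have "(\<Sum>b<min q (Suc m). Suc m - b) = (\<Sum>b<m. m - b) + m + 1"
        using shift[of m m] by simp
      then show ?thesis using True by simp
    next
      case False
      then show ?thesis using shift[of q m] by simp
    qed
    then have "(of_nat (\<Sum>b<min q (Suc m). Suc m - b) :: rat) =
        of_nat (\<Sum>b<min q m. m - b) + of_nat (min q (Suc m))"
      by (simp only: of_nat_add)
    then show ?thesis
      using Suc by (simp add: fps_times_one_minus_X_nth del: of_nat_sum)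
  qed
qed

lemma shape_count_fps_closed:
  assumes "q \<ge> 1"
  shows "shape_count_fps q * (1 - fps_X)^2 * (1 - fps_X ^ (q + 1)) = fps_X * (1 - fps_X ^ q)"
proof -
  have "shape_count_fps q * (1 - fps_X)^2 * (1 - fps_X ^ (q + 1))
      = (shape_count_fps q * (1 - fps_X ^ Suc q)) * (1 - fps_X)^2"
    by (simp add: ac_simps)
  also have "shape_count_fps q * (1 - fps_X ^ Suc q) = Abs_fps (\<lambda>n. of_nat (min q n))"
    using shape_count_fps_eq[of q] by (simp add: algebra_simps)
  finally show ?thesis
    using min_fps_times_one_minus_X_sq[OF assms] by simp
qed

lemma shape_zeros_fps_closed:
  assumes "q \<ge> 1"
  shows "shape_zeros_fps q * (1 - fps_X)^3 * (1 - fps_X ^ (q + 1))^2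
    = fps_X * (1 - fps_X ^ q) * (1 - fps_X ^ (q + 2))"
proof -
  define x :: "rat fps" where "x = fps_X"
  define z :: "rat fps" where "z = fps_X ^ (q + 1)"
  define w :: "rat fps" where "w = fps_X * (1 - fps_X ^ q)"
  define m0 :: "rat fps" where "m0 = Abs_fps (\<lambda>n. of_nat (\<Sum>b<min q n. n - b))"
  have b0: "shape_zeros_fps q * (1 - z) = m0 + z * shape_count_fps q"
    using shape_zeros_fps_eq[of q] unfolding z_def m0_def by (simp add: algebra_simps)
  have "m0 * (1 - x)^3 = (m0 * (1 - x)) * (1 - x)^2"
    by algebra
  also have "\<dots> = w"
    using min_sum_fps_times_one_minus_X[of q] min_fps_times_one_minus_X_sq[OF assms]
    unfolding m0_def x_def w_def by simp
  finally have m0: "m0 * (1 - x)^3 = w" .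
  have b: "shape_count_fps q * (1 - x)^2 * (1 - z) = w"
    using shape_count_fps_closed[OF assms] unfolding x_def z_def w_def .
  have "shape_zeros_fps q * (1 - x)^3 * (1 - z)^2
      = (shape_zeros_fps q * (1 - z)) * (1 - x)^3 * (1 - z)"
    by algebra
  also have "\<dots> = (m0 * (1 - x)^3) * (1 - z) + z * (1 - x) * (shape_count_fps q * (1 - x)^2 * (1 - z))"
    unfolding b0 by algebra
  also have "\<dots> = w * (1 - x * z)"
    unfolding m0 b by algebra
  also have "x * z = fps_X ^ (q + 2)"
    unfolding x_def z_def by (simp add: power_add mult.commute)
  finally show ?thesis
    unfolding x_def z_def w_def .
qed

lemma proper_shape_denominator:
  assumes "q \<ge> 1"
  shows "(1 - (shape_count_fps q - fps_X * geometric_fps)) * (1 - fps_X)^2 * (1 - fps_X ^ (q + 1))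
    = 1 - 2 * fps_X + fps_X ^ (q + 2)"
proof -
  define x :: "rat fps" where "x = fps_X"
  define y :: "rat fps" where "y = fps_X ^ q"
  have g: "geometric_fps * (1 - x) = 1"
    unfolding x_def by (rule geometric_fps_times_one_minus_X)
  have b: "shape_count_fps q * (1 - x)^2 * (1 - x * y) = x * (1 - y)"
    using shape_count_fps_closed[OF assms] unfolding x_def y_def by simp
  have "(1 - (shape_count_fps q - x * geometric_fps)) * (1 - x)^2 * (1 - x * y)
      = (1 - x)^2 * (1 - x * y) - shape_count_fps q * (1 - x)^2 * (1 - x * y)
        + x * (1 - x) * (1 - x * y) * (geometric_fps * (1 - x))"
    by algebra
  also have "\<dots> = 1 - 2 * x + x * x * y"
    unfolding g b by algebra
  finally show ?thesis
    unfolding x_def y_def by (simp add: mult.assoc)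
qed

lemma zero_led_count_fps_closed:
  assumes "q \<ge> 1"
  shows "zero_led_count_fps q * (1 - 2 * fps_X + fps_X ^ (q + 2))
    = (1 - fps_X) * (1 - fps_X ^ (q + 1))"
proof -
  let ?bp = "shape_count_fps q - fps_X * geometric_fps"
  have "zero_led_count_fps q * (1 - ?bp) = geometric_fps"
    using zero_led_count_fps_eq[OF assms] by (simp add: algebra_simps)
  have "zero_led_count_fps q * (1 - 2 * fps_X + fps_X ^ (q + 2))
      = (zero_led_count_fps q * (1 - ?bp)) * (1 - fps_X)^2 * (1 - fps_X ^ (q + 1))"
    unfolding proper_shape_denominator[OF assms, symmetric] by (simp add: ac_simps)
  also have "\<dots> = (geometric_fps * (1 - fps_X)) * (1 - fps_X) * (1 - fps_X ^ (q + 1))"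
    unfolding \<open>zero_led_count_fps q * (1 - ?bp) = geometric_fps\<close> by (simp add: power2_eq_square ac_simps)
  finally show ?thesis
    by (simp add: geometric_fps_times_one_minus_X)
qed

lemma zero_led_zeros_fps_closed:
  assumes "q \<ge> 1"
  shows "zero_led_zeros_fps q * (1 - 2 * fps_X + fps_X ^ (q + 2))^2
    = fps_X * (1 - fps_X) * (1 - fps_X ^ q)"
proof -
  define x :: "rat fps" where "x = fps_X"
  define y :: "rat fps" where "y = fps_X ^ q"
  define d where "d = 1 - 2 * x + x * x * y"
  define bp where "bp = shape_count_fps q - x * geometric_fps"
  define t v j b0 where "t = zero_led_zeros_fps q" and "v = zero_led_count_fps q"
    and "j = naturals_fps" and "b0 = shape_zeros_fps q"
  have t_eq: "t * (1 - bp) = j + (b0 - j) * v"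
    using zero_led_zeros_fps_eq[OF assms] unfolding t_def v_def j_def b0_def bp_def x_def
    by (simp add: algebra_simps)
  have den: "(1 - bp) * (1 - x)^2 * (1 - x * y) = d"
    using proper_shape_denominator[OF assms] unfolding bp_def d_def x_def y_def
    by (simp add: mult.assoc)
  have v: "v * d = (1 - x) * (1 - x * y)"
    using zero_led_count_fps_closed[OF assms] unfolding v_def d_def x_def y_def
    by (simp add: mult.assoc)
  have "j * (1 - x)^2 = (j * (1 - x)) * (1 - x)"
    by algebra
  also have "\<dots> = x"
    unfolding j_def x_def naturals_fps_times_one_minus_X
    by (simp add: mult.assoc geometric_fps_times_one_minus_X)
  finally have j: "j * (1 - x)^2 = x" .
  have b0: "b0 * (1 - x)^3 * (1 - x * y)^2 = x * (1 - y) * (1 - x * x * y)"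
    using shape_zeros_fps_closed[OF assms] unfolding b0_def x_def y_def
    by (simp add: mult.assoc)
  have "t * d^2 = (t * (1 - bp)) * (1 - x)^2 * (1 - x * y) * d"
    unfolding den[symmetric] by algebra
  also have "\<dots> = (1 - x * y) * ((j * (1 - x)^2) * d
      + b0 * (1 - x)^3 * (1 - x * y) - (j * (1 - x)^2) * (1 - x) * (1 - x * y))"
    unfolding t_eq using v by algebra
  also have "\<dots> = x * (1 - x * y) * d + b0 * (1 - x)^3 * (1 - x * y)^2 - x * (1 - x) * (1 - x * y)^2"
    unfolding j by algebra
  also have "\<dots> = x * (1 - x) * (1 - y)"
    unfolding b0 d_def by algebra
  finally show ?thesis
    unfolding t_def d_def x_def y_def by (simp add: mult.assoc)
qed

lemma one_minus_X_neq_0: "(1 - fps_X :: rat fps) \<noteq> 0"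
proof
  assume "(1 - fps_X :: rat fps) = 0"
  then have "(1 - fps_X :: rat fps) $ 0 = 0" by simp
  then show False by simp
qed

lemma count_fps_closed:
  assumes "q \<ge> 1"
  shows "count_fps q * (1 - 2 * fps_X + fps_X ^ (q + 2)) = 1 - fps_X ^ (q + 1)"
proof -
  let ?D = "1 - 2 * fps_X + fps_X ^ (q + 2) :: rat fps"
  have "(count_fps q * ?D) * (1 - fps_X) = (count_fps q * (1 - fps_X)) * ?D"
    by algebra
  also have "\<dots> = (1 - fps_X ^ (q + 1)) * (1 - fps_X)"
    unfolding count_fps_times_one_minus_X zero_led_count_fps_closed[OF assms] by algebra
  finally show ?thesis
    using one_minus_X_neq_0 by simp
qed

lemma letter_total_0_fps_closed:
  assumes "q \<ge> 1"
  shows "Abs_fps (\<lambda>n. of_nat (letter_total q 0 n) :: rat) * (1 - 2 * fps_X + fps_X ^ (q + 2))^2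
    = fps_X * (1 - fps_X ^ q)"
proof -
  let ?D = "1 - 2 * fps_X + fps_X ^ (q + 2) :: rat fps"
  let ?S = "Abs_fps (\<lambda>n. of_nat (letter_total q 0 n)) :: rat fps"
  have "(?S * ?D^2) * (1 - fps_X) = (?S * (1 - fps_X)) * ?D^2"
    by algebra
  also have "\<dots> = (fps_X * (1 - fps_X ^ q)) * (1 - fps_X)"
    unfolding letter_total_0_fps_times_one_minus_X zero_led_zeros_fps_closed[OF assms] by algebra
  finally show ?thesis
    using one_minus_X_neq_0 by simp
qed

lemma letter_total_1_add_0:
  "letter_total q 1 n + letter_total q 0 n = n * card (q_dec_words q n)"
proof -
  have "letter_total q 1 n + letter_total q 0 n
      = (\<Sum>w\<in>q_dec_words q n. count_list w 0 + count_list w 1)"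
    unfolding letter_total_def by (simp add: sum.distrib)
  also have "\<dots> = (\<Sum>w\<in>q_dec_words q n. n)"
  proof (rule sum.cong)
    fix w assume "w \<in> q_dec_words q n"
    then have "set w \<subseteq> {0, 1}" "length w = n"
      unfolding q_dec_words_def by auto
    then show "count_list w 0 + count_list w 1 = n"
      using sum_count_set[of w "{0, 1}"] by simp
  qed simp
  finally show ?thesis by simp
qed

lemma letter_total_fps_add:
  "Abs_fps (\<lambda>n. of_nat (letter_total q 1 n)) + Abs_fps (\<lambda>n. of_nat (letter_total q 0 n))
    = fps_X * fps_deriv (count_fps q)"
proof (rule fps_ext)
  fix n
  have "(of_nat (letter_total q 1 n) + of_nat (letter_total q 0 n) :: rat)
      = of_nat n * of_nat (card (q_dec_words q n))"
    using letter_total_1_add_0[of q n] by (metis of_nat_add of_nat_mult)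
  then show "(Abs_fps (\<lambda>n. of_nat (letter_total q 1 n)) + Abs_fps (\<lambda>n. of_nat (letter_total q 0 n))) $ n
      = (fps_X * fps_deriv (count_fps q)) $ n"
    by (cases n) (simp_all add: count_fps_def letter_total_def q_dec_words_0)
qed

lemma letter_total_1_fps_closed:
  assumes "q \<ge> 1"
  shows "Abs_fps (\<lambda>n. of_nat (letter_total q 1 n) :: rat) * (1 - 2 * fps_X + fps_X ^ (q + 2))^2
    = fps_X * (1 - of_nat q * fps_X ^ q + of_nat q * fps_X ^ (q + 1)
               - 2 * fps_X ^ (q + 1) + fps_X ^ (2 * q + 2))"
proof -
  define x :: "rat fps" where "x = fps_X"
  define y :: "rat fps" where "y = fps_X ^ q"
  define Q :: "rat fps" where "Q = of_nat q"
  define d where "d = 1 - 2 * x + x * x * y"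
  define c where "c = count_fps q"
  define s0 s1 where "s0 = Abs_fps (\<lambda>n. of_nat (letter_total q 0 n) :: rat)"
    and "s1 = Abs_fps (\<lambda>n. of_nat (letter_total q 1 n) :: rat)"
  have powers: "fps_X ^ (q + 1) = x * y" "fps_X ^ (q + 2) = x * x * y"
    "fps_X ^ (2 * q + 2) = x * x * y * y"
    unfolding x_def y_def by (simp_all add: power_add power_mult power2_eq_square ac_simps)
  have s1: "s1 = x * fps_deriv c - s0"
    using letter_total_fps_add[of q] unfolding s0_def s1_def c_def x_def
    by (simp add: algebra_simps)
  have cd: "c * d = 1 - x * y"
    using count_fps_closed[OF assms] unfolding c_def d_def powers by (simp add: x_def)
  have s0: "s0 * d^2 = x * (1 - y)"
    using letter_total_0_fps_closed[OF assms] unfolding s0_def d_def powers by (simp add: x_def y_def)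
  have deriv_X_power: "fps_deriv (fps_X ^ Suc k :: rat fps) = of_nat (Suc k) * fps_X ^ k" for k
    by (simp only: fps_deriv_power') simp
  have d_eq: "d = 1 - 2 * fps_X + fps_X ^ Suc (Suc q)" and xy: "x * y = fps_X ^ Suc q"
    unfolding d_def x_def y_def by (simp_all add: mult.assoc)
  have dd: "fps_deriv d = (Q + 2) * (x * y) - 2"
    unfolding d_eq xy Q_def using deriv_X_power[of "Suc q"]
    by (simp del: power_Suc add: algebra_simps)
  have dn: "fps_deriv (1 - x * y) = - ((Q + 1) * y)"
    unfolding xy Q_def using deriv_X_power[of q]
    by (simp del: power_Suc add: y_def algebra_simps)
  have "fps_deriv c * d + c * fps_deriv d = fps_deriv (c * d)"
    by (simp add: algebra_simps)
  also have "\<dots> = - ((Q + 1) * y)"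
    unfolding cd dn ..
  finally have "s1 * d^2 = x * d * (- ((Q + 1) * y) - c * fps_deriv d) - s0 * d^2"
    unfolding s1 by algebra
  also have "\<dots> = - ((Q + 1) * x * y * d) - x * fps_deriv d * (c * d) - x * (1 - y)"
    unfolding s0 by algebra
  also have "\<dots> = x * (1 - Q * y + Q * (x * y) - 2 * (x * y) + x * x * y * y)"
    unfolding cd dd unfolding d_def by algebra
  finally show ?thesis
    unfolding s1_def d_def Q_def powers by (simp add: x_def y_def)
qed

theorem corollary3:
  fixes q :: nat
  assumes "q \<ge> 1"
  shows "Abs_fps (\<lambda>n. of_nat (letter_total q 1 n) :: rat) =
           fps_X * (1 - of_nat q * fps_X ^ q + of_nat q * fps_X ^ (q + 1)
                      - 2 * fps_X ^ (q + 1) + fps_X ^ (2 * q + 2))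
           / (1 - 2 * fps_X + fps_X ^ (q + 2)) ^ 2
       \<and> Abs_fps (\<lambda>n. of_nat (letter_total q 0 n) :: rat) =
           fps_X * (1 - fps_X ^ q) / (1 - 2 * fps_X + fps_X ^ (q + 2)) ^ 2"
proof -
  have "(1 - 2 * fps_X + fps_X ^ (q + 2) :: rat fps) $ 0 = 1"
    by simp
  then have "(1 - 2 * fps_X + fps_X ^ (q + 2) :: rat fps) ^ 2 \<noteq> 0"
    by (metis one_neq_zero fps_zero_nth power_not_zero)
  then show ?thesis
    using letter_total_1_fps_closed[OF assms] letter_total_0_fps_closed[OF assms]
    by (metis nonzero_mult_div_cancel_right)
qed

end
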